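(* Let $f:(M,g_M)\to(N,g_N)$ be a conformal Riemannian morphism between Riemannian manifolds with $M$ compact. Then $\dim\ker(df_x)$ and the dimension of a Conf subspace $\mathrm{Conf}(df_x)$ corresponding to $df_x$ are constant on each connected component of $M$.
   Context: A linear map $T:V\to W$ between real inner-product spaces is a geometric function if there exist a subspace $C\subset V$ with $V=\ker T\oplus C$ and $r>0$ with $\langle T u,T v\rangle=r\langle u,v\rangle$ for all $u,v\in C$ ($r$ is a conformality factor, $C$ a Conf subspace $\mathrm{Conf}(T)$). A smooth $f:(M,g_M)\to(N,g_N)$ is a conformal Riemannian morphism if there is a smooth $\wedge_f:M\to\mathbb{R}^{+}$, called the Riemannian factor, such that each $df_x$ is a geometric function with conformality factor $\wedge_f(x)$. *)

theory Defs
  imports "HOL-Analysis.Analysis"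
begin

fun Ck_on :: "nat \<Rightarrow> ('a::euclidean_space \<Rightarrow> 'b::euclidean_space) \<Rightarrow> 'a set \<Rightarrow> bool" where
  "Ck_on 0 f U = continuous_on U f"
| "Ck_on (Suc k) f U =
     ((\<forall>x\<in>U. f differentiable (at x)) \<and>
      (\<forall>v. Ck_on k (\<lambda>x. frechet_derivative f (at x) v) U))"

definition smooth_on :: "('a::euclidean_space \<Rightarrow> 'b::euclidean_space) \<Rightarrow> 'a set \<Rightarrow> bool" where
  "smooth_on f U \<longleftrightarrow> open U \<and> (\<forall>k. Ck_on k f U)"

definition embedded_submanifold :: "'a::euclidean_space set \<Rightarrow> nat \<Rightarrow> bool" where
  "embedded_submanifold M m \<longleftrightarrow>
     (\<forall>p\<in>M. \<exists>U W (\<phi>::'a \<Rightarrow> 'a) \<psi> S.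
        open U \<and> p \<in> U \<and> open W \<and> smooth_on \<phi> U \<and> smooth_on \<psi> W \<and>
        \<phi> ` U = W \<and> (\<forall>x\<in>U. \<psi> (\<phi> x) = x) \<and> (\<forall>y\<in>W. \<phi> (\<psi> y) = y) \<and>
        subspace S \<and> dim S = m \<and> \<phi> ` (M \<inter> U) = W \<inter> S)"

definition curve_through :: "'a::euclidean_space set \<Rightarrow> 'a \<Rightarrow> (real \<Rightarrow> 'a) \<Rightarrow> bool" where
  "curve_through M p \<gamma> \<longleftrightarrow> smooth_on \<gamma> UNIV \<and> (\<forall>t. \<gamma> t \<in> M) \<and> \<gamma> 0 = p"

definition tangent_space :: "'a::euclidean_space set \<Rightarrow> 'a \<Rightarrow> 'a set" where
  "tangent_space M p = {v. \<exists>\<gamma>. curve_through M p \<gamma> \<and> (\<gamma> has_vector_derivative v) (at 0)}"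

definition smooth_map :: "'a::euclidean_space set \<Rightarrow> 'b::euclidean_space set \<Rightarrow> ('a \<Rightarrow> 'b) \<Rightarrow> bool" where
  "smooth_map M N f \<longleftrightarrow> f ` M \<subseteq> N \<and>
     (\<forall>p\<in>M. \<exists>U F. p \<in> U \<and> smooth_on F U \<and> (\<forall>x\<in>M \<inter> U. F x = f x))"

definition smooth_fun_on :: "'a::euclidean_space set \<Rightarrow> ('a \<Rightarrow> real) \<Rightarrow> bool" where
  "smooth_fun_on M h \<longleftrightarrow> (\<forall>p\<in>M. \<exists>U F. p \<in> U \<and> smooth_on F U \<and> (\<forall>x\<in>M \<inter> U. F x = h x))"

definition differential :: "'a::euclidean_space set \<Rightarrow> ('a \<Rightarrow> 'b::euclidean_space) \<Rightarrow> 'a \<Rightarrow> 'a \<Rightarrow> 'b" where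
  "differential M f p v = (SOME w. \<exists>\<gamma>. curve_through M p \<gamma> \<and>
      (\<gamma> has_vector_derivative v) (at 0) \<and> ((f \<circ> \<gamma>) has_vector_derivative w) (at 0))"

definition riemannian_metric :: "'a::euclidean_space set \<Rightarrow> ('a \<Rightarrow> 'a \<Rightarrow> 'a \<Rightarrow> real) \<Rightarrow> bool" where
  "riemannian_metric M g \<longleftrightarrow>
     (\<forall>p\<in>M. bilinear (g p) \<and>
        (\<forall>u\<in>tangent_space M p. \<forall>v\<in>tangent_space M p. g p u v = g p v u) \<and>
        (\<forall>u\<in>tangent_space M p. u \<noteq> 0 \<longrightarrow> g p u u > 0)) \<and>
     (\<forall>u v. smooth_fun_on M (\<lambda>p. g p u v))"

definition conf_subspace ::
  "('a::euclidean_space \<Rightarrow> 'b::euclidean_space) \<Rightarrow> 'a set \<Rightarrow> ('a \<Rightarrow> 'a \<Rightarrow> real) \<Rightarrow>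
   ('b \<Rightarrow> 'b \<Rightarrow> real) \<Rightarrow> 'a set \<Rightarrow> real \<Rightarrow> bool" where
  "conf_subspace T V gV gW C r \<longleftrightarrow>
     subspace C \<and> C \<subseteq> V \<and> r > 0 \<and>
     {v\<in>V. T v = 0} \<inter> C = {0} \<and>
     {k + c | k c. k \<in> {v\<in>V. T v = 0} \<and> c \<in> C} = V \<and>
     (\<forall>u\<in>C. \<forall>v\<in>C. gW (T u) (T v) = r * gV u v)"

definition geometric_function ::
  "('a::euclidean_space \<Rightarrow> 'b::euclidean_space) \<Rightarrow> 'a set \<Rightarrow> ('a \<Rightarrow> 'a \<Rightarrow> real) \<Rightarrow>
   ('b \<Rightarrow> 'b \<Rightarrow> real) \<Rightarrow> real \<Rightarrow> bool" where
  "geometric_function T V gV gW r \<longleftrightarrow> (\<exists>C. conf_subspace T V gV gW C r)"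

definition conformal_riemannian_morphism ::
  "'a::euclidean_space set \<Rightarrow> ('a \<Rightarrow> 'a \<Rightarrow> 'a \<Rightarrow> real) \<Rightarrow>
   'b::euclidean_space set \<Rightarrow> ('b \<Rightarrow> 'b \<Rightarrow> 'b \<Rightarrow> real) \<Rightarrow> ('a \<Rightarrow> 'b) \<Rightarrow> bool" where
  "conformal_riemannian_morphism M gM N gN f \<longleftrightarrow>
     smooth_map M N f \<and>
     (\<exists>\<Lambda>. smooth_fun_on M \<Lambda> \<and> (\<forall>x\<in>M. \<Lambda> x > 0) \<and>
        (\<forall>x\<in>M. geometric_function (differential M f x) (tangent_space M x)
                   (gM x) (gN (f x)) (\<Lambda> x)))"

end

theory Submission
  imports Defs
begin

text \<open>
  In a chart, the differential \<open>df\<^sub>x\<close> becomes a linear map on a fixed model space \<open>S\<close>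
  that depends continuously on \<open>x\<close>. The kernel dimension \<open>k(x)\<close> is then upper
  semicontinuous: \<open>df\<^sub>x\<^sub>0\<close> is injective on a complement of its kernel, and by compactness
  of the unit sphere of that complement so is \<open>df\<^sub>x\<close> for \<open>x\<close> near \<open>x\<^sub>0\<close>. Conformality
  gives lower semicontinuity: \<open>\<Lambda> g\<^sub>M(v,v) - g\<^sub>N(df v, df v)\<close> is positive on the unit
  sphere of \<open>ker df\<^sub>x\<^sub>0\<close>, hence also at nearby \<open>x\<close>, while it vanishes on every Conf
  subspace of \<open>df\<^sub>x\<close>; so such a subspace meets \<open>ker df\<^sub>x\<^sub>0\<close> trivially. Thus \<open>k\<close> is
  locally constant, hence constant on connected components, and
  \<open>dim Conf(df\<^sub>x) = dim M - k(x)\<close>.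
\<close>

section \<open>Calculus of \<open>C\<^sup>k\<close> maps\<close>

lemma has_derivative_cong_open:
  assumes "open U" "x \<in> U" "\<And>y. y \<in> U \<Longrightarrow> f y = g y"
  shows "(f has_derivative f') (at x) \<longleftrightarrow> (g has_derivative f') (at x)"
  using assms has_derivative_transform_within_open by metis

lemma Ck_on_cong:
  assumes "open U" "\<And>x. x \<in> U \<Longrightarrow> f x = g x"
  shows "Ck_on k f U = Ck_on k g U"
  using assms(2)
proof (induction k arbitrary: f g)
  case 0
  then show ?case
    using continuous_on_cong by force
next
  case (Suc k)
  have deriv: "frechet_derivative f (at x) = frechet_derivative g (at x)"
    and diff: "f differentiable (at x) \<longleftrightarrow> g differentiable (at x)" if "x \<in> U" for x
    using has_derivative_cong_open[OF assms(1) that Suc.prems]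
    unfolding frechet_derivative_def differentiable_def by simp_all
  have "Ck_on k (\<lambda>x. frechet_derivative f (at x) v) U
      = Ck_on k (\<lambda>x. frechet_derivative g (at x) v) U" for v
    using deriv by (intro Suc.IH) simp
  with diff show ?case
    by (metis Ck_on.simps(2))
qed

lemma Ck_on_SucD: "Ck_on (Suc k) f U \<Longrightarrow> Ck_on k f U"
proof (induction k arbitrary: f)
  case 0
  then show ?case
    by (simp add: continuous_at_imp_continuous_on differentiable_imp_continuous_within)
qed simp

lemma Ck_on_Suc_imp_has_derivative:
  "Ck_on (Suc k) f U \<Longrightarrow> x \<in> U \<Longrightarrow> (f has_derivative frechet_derivative f (at x)) (at x)"
  by (simp add: frechet_derivative_works)

lemma Ck_on_Suc_iff_has_derivative:
  assumes "open U" and deriv: "\<And>x. x \<in> U \<Longrightarrow> (f has_derivative f' x) (at x)"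
  shows "Ck_on (Suc k) f U \<longleftrightarrow> (\<forall>v. Ck_on k (\<lambda>x. f' x v) U)"
proof -
  have "Ck_on k (\<lambda>x. frechet_derivative f (at x) v) U = Ck_on k (\<lambda>x. f' x v) U" for v
    by (intro Ck_on_cong[OF assms(1)]) (simp add: frechet_derivative_at[OF deriv])
  with deriv show ?thesis by (auto simp: differentiable_def)
qed

lemma Ck_on_const: "Ck_on k (\<lambda>x. c) U"
  by (induction k arbitrary: c) auto

lemma Ck_on_add:
  assumes "open U" "Ck_on k f U" "Ck_on k g U"
  shows "Ck_on k (\<lambda>x. f x + g x) U"
  using assms(2,3)
proof (induction k arbitrary: f g)
  case (Suc k)
  let ?f' = "\<lambda>x. frechet_derivative f (at x)" and ?g' = "\<lambda>x. frechet_derivative g (at x)"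
  have "((\<lambda>x. f x + g x) has_derivative (\<lambda>v. ?f' x v + ?g' x v)) (at x)" if "x \<in> U" for x
    using Suc.prems that by (intro has_derivative_add Ck_on_Suc_imp_has_derivative)
  moreover have "Ck_on k (\<lambda>x. ?f' x v + ?g' x v) U" for v
    using Suc by simp
  ultimately show ?case
    by (subst Ck_on_Suc_iff_has_derivative[OF assms(1)]) auto
qed (simp add: continuous_on_add)

lemma Ck_on_scaleR:
  fixes a :: "'a::euclidean_space \<Rightarrow> real"
  assumes "open U" "Ck_on k a U" "Ck_on k f U"
  shows "Ck_on k (\<lambda>x. a x *\<^sub>R f x) U"
  using assms(2,3)
proof (induction k arbitrary: a f)
  case (Suc k)
  let ?a' = "\<lambda>x. frechet_derivative a (at x)" and ?f' = "\<lambda>x. frechet_derivative f (at x)"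
  have "((\<lambda>x. a x *\<^sub>R f x) has_derivative (\<lambda>v. a x *\<^sub>R ?f' x v + ?a' x v *\<^sub>R f x)) (at x)"
    if "x \<in> U" for x
    using Suc.prems that by (intro has_derivative_scaleR Ck_on_Suc_imp_has_derivative)
  moreover have "Ck_on k (\<lambda>x. a x *\<^sub>R ?f' x v + ?a' x v *\<^sub>R f x) U" for v
  proof -
    have "Ck_on k a U" "Ck_on k f U"
      using Suc.prems Ck_on_SucD by blast+
    moreover have "Ck_on k (\<lambda>x. ?a' x v) U" "Ck_on k (\<lambda>x. ?f' x v) U"
      using Suc.prems by simp_all
    ultimately show ?thesis
      by (intro Ck_on_add[OF assms(1)] Suc.IH)
  qed
  ultimately show ?case
    by (subst Ck_on_Suc_iff_has_derivative[OF assms(1)]) auto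
qed (simp add: continuous_on_scaleR)

lemma Ck_on_inner_const:
  assumes "open U" "Ck_on k f U"
  shows "Ck_on k (\<lambda>x. f x \<bullet> c) U"
  using assms(2)
proof (induction k arbitrary: f)
  case (Suc k)
  have "((\<lambda>x. f x \<bullet> c) has_derivative (\<lambda>v. frechet_derivative f (at x) v \<bullet> c)) (at x)"
    if "x \<in> U" for x
    using Suc.prems that
    by (auto intro!: derivative_eq_intros Ck_on_Suc_imp_has_derivative)
  with Suc show ?case
    by (subst Ck_on_Suc_iff_has_derivative[OF assms(1)]) auto
qed (simp add: continuous_on_inner)

lemma Ck_on_sum:
  assumes "open U" "finite I" "\<And>i. i \<in> I \<Longrightarrow> Ck_on k (f i) U"
  shows "Ck_on k (\<lambda>x. \<Sum>i\<in>I. f i x) U"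
  using assms(2,3)
  by (induction I rule: finite_induct) (simp_all add: Ck_on_const Ck_on_add[OF assms(1)])

lemma linear_basis_expansion:
  fixes L :: "'a::euclidean_space \<Rightarrow> 'b::real_vector"
  assumes "linear L"
  shows "L w = (\<Sum>i\<in>Basis. (w \<bullet> i) *\<^sub>R L i)"
proof -
  have "L w = L (\<Sum>i\<in>Basis. (w \<bullet> i) *\<^sub>R i)"
    by (simp add: euclidean_representation)
  also have "\<dots> = (\<Sum>i\<in>Basis. (w \<bullet> i) *\<^sub>R L i)"
    by (simp add: linear_sum[OF assms] linear_scale[OF assms])
  finally show ?thesis .
qed

lemma Ck_on_compose:
  fixes h :: "'a::euclidean_space \<Rightarrow> 'b::euclidean_space" and g :: "'b \<Rightarrow> 'c::euclidean_space"
  assumes "open U" "open V" "h ` U \<subseteq> V" "Ck_on k g V" "Ck_on k h U"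
  shows "Ck_on k (\<lambda>x. g (h x)) U"
  using assms(4,5)
proof (induction k arbitrary: g)
  case 0
  then show ?case using assms(3) by (auto intro: continuous_on_compose2)
next
  case (Suc k)
  let ?h' = "\<lambda>x. frechet_derivative h (at x)" and ?g' = "\<lambda>y. frechet_derivative g (at y)"
  have "((\<lambda>x. g (h x)) has_derivative (\<lambda>v. \<Sum>i\<in>Basis. (?h' x v \<bullet> i) *\<^sub>R ?g' (h x) i)) (at x)"
    if "x \<in> U" for x
  proof -
    have "((g \<circ> h) has_derivative (?g' (h x) \<circ> ?h' x)) (at x)"
      using Suc.prems that assms(3)
      by (intro diff_chain_at Ck_on_Suc_imp_has_derivative) auto
    moreover have "linear (?g' (h x))"
      using Suc.prems that assms(3) by (auto intro: linear_frechet_derivative)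
    ultimately show ?thesis
      by (simp add: o_def linear_basis_expansion[of "?g' (h x)"])
  qed
  moreover have "Ck_on k (\<lambda>x. \<Sum>i\<in>Basis. (?h' x v \<bullet> i) *\<^sub>R ?g' (h x) i) U" for v
  proof (intro Ck_on_sum Ck_on_scaleR Ck_on_inner_const assms(1) finite_Basis)
    show "Ck_on k (\<lambda>x. ?h' x v) U"
      using Suc.prems by simp
    show "Ck_on k (\<lambda>x. ?g' (h x) i) U" for i
      using Suc.prems Ck_on_SucD[of k h] by (intro Suc.IH) simp_all
  qed
  ultimately show ?case
    by (subst Ck_on_Suc_iff_has_derivative[OF assms(1)]) auto
qed

lemma Ck_on_sin_cos: "Ck_on k (\<lambda>t::real. a * sin (c * t) + b * cos (c * t)) UNIV"
proof (induction k arbitrary: a b)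
  case (Suc k)
  have "((\<lambda>t::real. a * sin (c * t) + b * cos (c * t)) has_derivative
      (\<lambda>v. (- (v * b * c)) * sin (c * t) + (v * a * c) * cos (c * t))) (at t)" for t
    by (auto intro!: derivative_eq_intros simp: algebra_simps)
  then have "Ck_on (Suc k) (\<lambda>t::real. a * sin (c * t) + b * cos (c * t)) UNIV \<longleftrightarrow>
      (\<forall>v. Ck_on k (\<lambda>t. (- (v * b * c)) * sin (c * t) + (v * a * c) * cos (c * t)) UNIV)"
    by (rule Ck_on_Suc_iff_has_derivative[OF open_UNIV])
  with Suc.IH show ?case
    by blast
qed (simp add: continuous_intros)

lemma smooth_on_open: "smooth_on F U \<Longrightarrow> open U"
  by (simp add: smooth_on_def)

lemma smooth_on_Ck_on: "smooth_on F U \<Longrightarrow> Ck_on k F U"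
  by (simp add: smooth_on_def)

lemma smooth_on_continuous_on: "smooth_on F U \<Longrightarrow> continuous_on U F"
  using smooth_on_Ck_on[of F U 0] by simp

lemma smooth_on_has_derivative:
  "smooth_on F U \<Longrightarrow> x \<in> U \<Longrightarrow> (F has_derivative frechet_derivative F (at x)) (at x)"
  using smooth_on_Ck_on[of F U "Suc 0"] by (rule Ck_on_Suc_imp_has_derivative)

lemma smooth_on_continuous_on_derivative:
  "smooth_on F U \<Longrightarrow> continuous_on U (\<lambda>x. frechet_derivative F (at x) v)"
  using smooth_on_Ck_on[of F U "Suc 0"] by simp

lemma smooth_fun_on_continuous_on:
  assumes "smooth_fun_on M h"
  shows "continuous_on M h"
  unfolding continuous_on_eq_continuous_within
proof
  fix p assume "p \<in> M"
  then obtain U F where U: "p \<in> U" "smooth_on F U" "\<forall>x\<in>M \<inter> U. F x = h x"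
    using assms unfolding smooth_fun_on_def by blast
  then have "continuous (at p within M) F"
    using smooth_on_open smooth_on_continuous_on continuous_on_eq_continuous_at
    by (blast intro: continuous_at_imp_continuous_within)
  moreover have "eventually (\<lambda>x. F x = h x) (at p within M)"
    unfolding eventually_at_topological using U smooth_on_open by blast
  ultimately show "continuous (at p within M) h"
    using U \<open>p \<in> M\<close> by (simp add: continuous_within Lim_transform_eventually)
qed

text \<open>Curves through a point are defined on all of \<open>\<real>\<close>, so the straight line through \<open>p\<close>
  is reparametrised by a bounded sine to stay inside \<open>W\<close>.\<close>

lemma smooth_line_in_open_set:
  fixes p s :: "'a::euclidean_space"
  assumes "open W" "p \<in> W"
  obtains h :: "real \<Rightarrow> 'a" where "\<And>k. Ck_on k h UNIV" "\<And>t. h t \<in> W"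
    "\<And>t. \<exists>c. h t = p + c *\<^sub>R s" "h 0 = p" "(h has_vector_derivative s) (at 0)"
proof -
  obtain e where "e > 0" and ball: "ball p e \<subseteq> W"
    using openE[OF assms] by blast
  define d where "d = e / (norm s + 1)"
  have "d > 0" "d * norm s < e"
    using \<open>e > 0\<close> by (simp_all add: d_def add_nonneg_pos divide_simps not_less)
  define a where "a t = d * sin ((1 / d) * t) + 0 * cos ((1 / d) * t)" for t
  have "norm (a t *\<^sub>R s) < e" for t
  proof -
    have "norm (a t *\<^sub>R s) \<le> d * norm s"
      using \<open>d > 0\<close> mult_right_mono[OF mult_left_le[OF abs_sin_le_one], of d "norm s"]
      by (simp add: a_def abs_mult)
    then show ?thesis
      using \<open>d * norm s < e\<close> by linarith
  qed
  then have in_W: "p + a t *\<^sub>R s \<in> W" for t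
    using ball by (auto simp: dist_norm)
  have smooth: "Ck_on k (\<lambda>t. p + a t *\<^sub>R s) UNIV" for k
    unfolding a_def by (intro Ck_on_add Ck_on_scaleR Ck_on_const Ck_on_sin_cos open_UNIV)
  have "(a has_real_derivative 1) (at 0)"
    unfolding a_def using \<open>d > 0\<close> by (auto intro!: derivative_eq_intros)
  then have "((\<lambda>t. p + a t *\<^sub>R s) has_vector_derivative s) (at 0)"
    by (auto intro!: derivative_eq_intros simp: has_real_derivative_iff_has_vector_derivative)
  with in_W smooth show thesis
    by (intro that[of "\<lambda>t. p + a t *\<^sub>R s"]) (auto simp: a_def)
qed

section \<open>Curves and differentials\<close>

lemma has_vector_derivative_in_subspace:
  fixes \<eta> :: "real \<Rightarrow> 'a::euclidean_space"
  assumes "subspace S" "eventually (\<lambda>t. \<eta> t \<in> S) (at 0)" "\<eta> 0 \<in> S"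
    and "(\<eta> has_vector_derivative w) (at 0)"
  shows "w \<in> S"
proof -
  have "((\<lambda>h. norm ((\<eta> h - \<eta> 0) - h *\<^sub>R w) / norm h) \<longlongrightarrow> 0) (at 0)"
    using assms(4) unfolding has_vector_derivative_def has_derivative_at by simp
  moreover have "\<forall>\<^sub>F h in at 0. norm ((\<eta> h - \<eta> 0) - h *\<^sub>R w) / norm h
      = norm ((\<eta> h - \<eta> 0) /\<^sub>R h - w)"
  proof (rule eventually_at_filter[THEN iffD2, OF always_eventually], intro allI impI)
    fix h :: real assume "h \<noteq> 0"
    then have "(\<eta> h - \<eta> 0) /\<^sub>R h - w = (1 / h) *\<^sub>R ((\<eta> h - \<eta> 0) - h *\<^sub>R w)"
      by (simp add: scaleR_diff_right divide_inverse)
    then show "norm ((\<eta> h - \<eta> 0) - h *\<^sub>R w) / norm h = norm ((\<eta> h - \<eta> 0) /\<^sub>R h - w)"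
      by (simp add: divide_simps)
  qed
  ultimately have "((\<lambda>h. norm ((\<eta> h - \<eta> 0) /\<^sub>R h - w)) \<longlongrightarrow> 0) (at 0)"
    by (rule Lim_transform_eventually)
  then have lim: "((\<lambda>h. (\<eta> h - \<eta> 0) /\<^sub>R h) \<longlongrightarrow> w) (at 0)"
    by (simp add: tendsto_norm_zero_iff Lim_null[symmetric])
  have "eventually (\<lambda>h. (\<eta> h - \<eta> 0) /\<^sub>R h \<in> S) (at 0)"
    using assms(2) by eventually_elim (use assms(1,3) in \<open>simp add: subspace_scale subspace_diff\<close>)
  then show ?thesis
    using Lim_in_closed_set[OF closed_subspace[OF assms(1)] _ at_neq_bot lim] by blast
qed

lemma has_vector_derivative_along_curve:
  assumes "open V" "x \<in> M \<inter> V" "(F has_derivative F') (at x)" "\<forall>y\<in>M \<inter> V. F y = f y"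
    and "curve_through M x \<gamma>" "(\<gamma> has_vector_derivative v) (at 0)"
  shows "((f \<circ> \<gamma>) has_vector_derivative F' v) (at 0)"
proof -
  have \<gamma>: "\<gamma> 0 = x" "\<forall>t. \<gamma> t \<in> M" "continuous_on UNIV \<gamma>"
    using assms(5) smooth_on_continuous_on unfolding curve_through_def by auto
  have "((F \<circ> \<gamma>) has_derivative (F' \<circ> (\<lambda>h. h *\<^sub>R v))) (at 0)"
    using assms(3,6) \<gamma>(1) unfolding has_vector_derivative_def by (intro diff_chain_at) simp_all
  then have "((F \<circ> \<gamma>) has_vector_derivative F' v) (at 0)"
    using linear_scale[OF has_derivative_linear[OF assms(3)]]
    unfolding has_vector_derivative_def by (simp add: o_def)
  then show ?thesis
    by (rule has_vector_derivative_transform_within_open[OF _ open_vimage[OF assms(1) \<gamma>(3)]])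
      (use assms(2,4) \<gamma> in auto)
qed

lemma differential_eq_ambient_derivative:
  assumes "open V" "x \<in> M \<inter> V" "(F has_derivative F') (at x)" "\<forall>y\<in>M \<inter> V. F y = f y"
    and "v \<in> tangent_space M x"
  shows "differential M f x v = F' v"
proof -
  let ?P = "\<lambda>w. \<exists>\<gamma>. curve_through M x \<gamma> \<and> (\<gamma> has_vector_derivative v) (at 0)
    \<and> ((f \<circ> \<gamma>) has_vector_derivative w) (at 0)"
  have "?P (F' v)"
    using assms(5) has_vector_derivative_along_curve[OF assms(1-4)]
    unfolding tangent_space_def by blast
  moreover have "w = F' v" if "?P w" for w
    using that has_vector_derivative_along_curve[OF assms(1-4)] vector_derivative_unique_at
    by blast
  ultimately show ?thesis
    unfolding differential_def by (rule someI2)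
qed

section \<open>Continuous families of linear and bilinear maps\<close>

lemma bilinear_basis_expansion:
  fixes g :: "'a::euclidean_space \<Rightarrow> 'b::euclidean_space \<Rightarrow> real"
  assumes "bilinear g"
  shows "g u v = (\<Sum>i\<in>Basis. \<Sum>j\<in>Basis. (u \<bullet> i) * (v \<bullet> j) * g i j)"
proof -
  have "linear (\<lambda>x. g x v)" "linear (g i)" for i
    using assms unfolding bilinear_def by simp_all
  then have "g u v = (\<Sum>i\<in>Basis. (u \<bullet> i) * g i v)"
    and "g i v = (\<Sum>j\<in>Basis. (v \<bullet> j) * g i j)" for i
    by (simp_all add: linear_basis_expansion[of "\<lambda>x. g x v" u] linear_basis_expansion[of "g i" v])
  then show ?thesis
    by (simp add: sum_distrib_left mult.assoc)
qed

lemma continuous_on_linear_family: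
  fixes L :: "'z::topological_space \<Rightarrow> 'a::euclidean_space \<Rightarrow> 'b::real_normed_vector"
  assumes "\<And>z. z \<in> X \<Longrightarrow> linear (L z)" "\<And>i. i \<in> Basis \<Longrightarrow> continuous_on X (\<lambda>z. L z i)"
    and "continuous_on X w"
  shows "continuous_on X (\<lambda>z. L z (w z))"
proof -
  have "continuous_on X (\<lambda>z. \<Sum>i\<in>Basis. (w z \<bullet> i) *\<^sub>R L z i)"
    using assms(2,3) by (intro continuous_intros) auto
  then show ?thesis
    by (rule continuous_on_cong[THEN iffD1, rotated 2])
      (simp_all add: assms(1) linear_basis_expansion[symmetric])
qed

lemma continuous_on_bilinear_family:
  fixes g :: "'z::topological_space \<Rightarrow> 'a::euclidean_space \<Rightarrow> 'b::euclidean_space \<Rightarrow> real"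
  assumes "\<And>z. z \<in> X \<Longrightarrow> bilinear (g z)"
    and "\<And>i j. i \<in> Basis \<Longrightarrow> j \<in> Basis \<Longrightarrow> continuous_on X (\<lambda>z. g z i j)"
    and "continuous_on X u" "continuous_on X v"
  shows "continuous_on X (\<lambda>z. g z (u z) (v z))"
proof -
  have "continuous_on X (\<lambda>z. \<Sum>i\<in>Basis. \<Sum>j\<in>Basis. (u z \<bullet> i) * (v z \<bullet> j) * g z i j)"
    using assms(2-4) by (intro continuous_intros) auto
  then show ?thesis
    by (rule continuous_on_cong[THEN iffD1, rotated 2])
      (simp_all add: assms(1) bilinear_basis_expansion[symmetric])
qed

lemma positive_near_compact_fibre:
  fixes g :: "'x::metric_space \<Rightarrow> 'a::metric_space \<Rightarrow> real"
  assumes "continuous_on (D \<times> K) (\<lambda>(x, s). g x s)" "compact K" "x0 \<in> D"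
    and "\<And>s. s \<in> K \<Longrightarrow> g x0 s > 0"
  obtains e where "e > 0" "\<And>x s. x \<in> D \<Longrightarrow> dist x x0 < e \<Longrightarrow> s \<in> K \<Longrightarrow> g x s > 0"
proof -
  obtain A where A: "open A" "A \<inter> (D \<times> K) = (\<lambda>(x, s). g x s) -` {0<..} \<inter> (D \<times> K)"
    using assms(1)[unfolded continuous_on_open_invariant, rule_format, OF open_greaterThan]
    by blast
  have "{x0} \<times> K \<subseteq> A"
    using A(2) assms(3,4) by auto
  then obtain X0 where X0: "x0 \<in> X0" "open X0" "X0 \<times> K \<subseteq> A"
    using Elementary_Topology.tube_lemma[OF assms(2) A(1)] by blast
  obtain e where "e > 0" "ball x0 e \<subseteq> X0"
    using X0(1,2) openE by blast
  then show ?thesis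
    using X0(3) A(2) by (intro that[of e]) (auto simp: dist_commute subset_iff)
qed

lemma positive_near_on_subspace:
  fixes q :: "'x::metric_space \<Rightarrow> 'a::euclidean_space \<Rightarrow> real"
  assumes "continuous_on (D \<times> UNIV) (\<lambda>(x, s). q x s)" "subspace K" "x0 \<in> D"
    and pos: "\<And>s. s \<in> K \<Longrightarrow> s \<noteq> 0 \<Longrightarrow> q x0 s > 0"
    and scale: "\<And>x s c. x \<in> D \<Longrightarrow> c > 0 \<Longrightarrow> q x s > 0 \<Longrightarrow> q x (c *\<^sub>R s) > 0"
  obtains e where "e > 0"
    "\<And>x s. x \<in> D \<Longrightarrow> dist x x0 < e \<Longrightarrow> s \<in> K \<Longrightarrow> s \<noteq> 0 \<Longrightarrow> q x s > 0"
proof -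
  let ?K1 = "sphere 0 1 \<inter> K"
  have "compact ?K1"
    by (rule compact_Int_closed[OF compact_sphere closed_subspace[OF assms(2)]])
  moreover have "continuous_on (D \<times> ?K1) (\<lambda>(x, s). q x s)"
    by (rule continuous_on_subset[OF assms(1)]) auto
  moreover have "q x0 s > 0" if "s \<in> ?K1" for s
    using that pos by (metis IntD1 IntD2 mem_sphere_0 norm_zero zero_neq_one)
  ultimately obtain e where e: "e > 0"
    and near: "\<And>x s. x \<in> D \<Longrightarrow> dist x x0 < e \<Longrightarrow> s \<in> ?K1 \<Longrightarrow> q x s > 0"
    using positive_near_compact_fibre[OF _ _ assms(3)] by blast
  have "q x s > 0" if "x \<in> D" "dist x x0 < e" "s \<in> K" "s \<noteq> 0" for x s
  proof -
    have "s /\<^sub>R norm s \<in> ?K1"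
      using that(3,4) subspace_scale[OF assms(2)] by simp
    then have "q x (s /\<^sub>R norm s) > 0"
      using that(1,2) near by blast
    from scale[OF that(1) _ this, of "norm s"] show ?thesis
      using that(4) by simp
  qed
  with e show ?thesis
    using that by blast
qed

lemma riemannian_metric_bilinear: "riemannian_metric M g \<Longrightarrow> p \<in> M \<Longrightarrow> bilinear (g p)"
  by (simp add: riemannian_metric_def)

lemma riemannian_metric_positive:
  "riemannian_metric M g \<Longrightarrow> p \<in> M \<Longrightarrow> u \<in> tangent_space M p \<Longrightarrow> u \<noteq> 0 \<Longrightarrow> g p u u > 0"
  by (simp add: riemannian_metric_def)

lemma riemannian_metric_continuous_on:
  "riemannian_metric M g \<Longrightarrow> continuous_on M (\<lambda>p. g p u v)"
  by (simp add: riemannian_metric_def smooth_fun_on_continuous_on)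

lemma bilinear_scaleR_diag:
  "bilinear g \<Longrightarrow> g (c *\<^sub>R u) (c *\<^sub>R u) = c\<^sup>2 * g u u"
  by (simp add: bilinear_lmul bilinear_rmul power2_eq_square)

lemma continuous_on_metric_along_map:
  fixes g :: "'a::euclidean_space \<Rightarrow> 'a \<Rightarrow> 'a \<Rightarrow> real" and p :: "'z::topological_space \<Rightarrow> 'a"
  assumes "riemannian_metric N g" "continuous_on X p" "p ` X \<subseteq> N" "continuous_on X u"
  shows "continuous_on X (\<lambda>z. g (p z) (u z) (u z))"
proof (rule continuous_on_bilinear_family[where g="\<lambda>z. g (p z)", OF _ _ assms(4,4)])
  show "bilinear (g (p z))" if "z \<in> X" for z
    using that assms(1,3) riemannian_metric_bilinear by blast
  show "continuous_on X (\<lambda>z. g (p z) i j)" for i j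
    by (rule continuous_on_compose2[OF riemannian_metric_continuous_on[OF assms(1)] assms(2,3)])
qed

section \<open>Dimension counting and local constancy\<close>

lemma dim_add_le_of_Int_zero:
  fixes S E K :: "'a::euclidean_space set"
  assumes "subspace S" "subspace E" "subspace K" "E \<subseteq> S" "K \<subseteq> S" "E \<inter> K \<subseteq> {0}"
  shows "dim E + dim K \<le> dim S"
proof -
  have "dim {a + b |a b. a \<in> E \<and> b \<in> K} + dim (E \<inter> K) = dim E + dim K"
    by (rule dim_sums_Int[OF assms(2,3)])
  moreover have "dim (E \<inter> K) = 0"
    using assms(6) by (simp add: dim_eq_0)
  moreover have "dim {a + b |a b. a \<in> E \<and> b \<in> K} \<le> dim S"
    using assms(1,4,5) by (intro dim_subset) (auto intro: subspace_add)
  ultimately show ?thesis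
    by linarith
qed

lemma dim_kernel_add_dim_conf_subspace:
  assumes "conf_subspace T V gV gW C r" "subspace {v \<in> V. T v = 0}"
  shows "dim {v \<in> V. T v = 0} + dim C = dim V"
  using dim_sums_Int[OF assms(2), of C] assms(1)
  unfolding conf_subspace_def by (simp add: dim_eq_0)

lemma locally_constant_on_connected_component:
  fixes h :: "'a::metric_space \<Rightarrow> 'b"
  assumes "\<And>x0. x0 \<in> M \<Longrightarrow> \<exists>e>0. \<forall>x\<in>M. dist x x0 < e \<longrightarrow> h x = h x0"
    and "connected_component M x y"
  shows "h x = h y"
proof -
  obtain T where T: "connected T" "T \<subseteq> M" "x \<in> T" "y \<in> T"
    using assms(2) unfolding connected_component_def by blast
  have "h constant_on T"
  proof (rule locally_constant_imp_constant[OF T(1)])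
    fix a assume "a \<in> T"
    then obtain e where e: "e > 0" "\<forall>x\<in>M. dist x a < e \<longrightarrow> h x = h a"
      using assms(1) T(2) by blast
    have "\<forall>x\<in>T \<inter> ball a e. h x = h a"
      using e(2) T(2) by (auto simp: dist_commute)
    moreover have "a \<in> T \<inter> ball a e"
      using \<open>a \<in> T\<close> e(1) by simp
    ultimately show "\<exists>U. openin (top_of_set T) U \<and> a \<in> U \<and> (\<forall>x\<in>U. h x = h a)"
      using openin_open_Int[OF open_ball] by blast
  qed
  then show ?thesis
    using T(3,4) unfolding constant_on_def by metis
qed

section \<open>Charts and tangent spaces\<close>

locale chart =
  fixes M :: "'a::euclidean_space set" and U W :: "'a set" and \<phi> \<psi> :: "'a \<Rightarrow> 'a" and S :: "'a set"
  assumes open_U: "open U" and open_W: "open W"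
    and smooth_phi: "smooth_on \<phi> U" and smooth_psi: "smooth_on \<psi> W"
    and phi_image: "\<phi> ` U = W" and psi_phi: "\<And>x. x \<in> U \<Longrightarrow> \<psi> (\<phi> x) = x"
    and subspace_S: "subspace S" and phi_image_M: "\<phi> ` (M \<inter> U) = W \<inter> S"
begin

definition dpsi :: "'a \<Rightarrow> 'a \<Rightarrow> 'a"
  where "dpsi x = frechet_derivative \<psi> (at (\<phi> x))"

lemma phi_in_W: "x \<in> U \<Longrightarrow> \<phi> x \<in> W"
  using phi_image by blast

lemma has_derivative_psi: "x \<in> U \<Longrightarrow> (\<psi> has_derivative dpsi x) (at (\<phi> x))"
  unfolding dpsi_def by (rule smooth_on_has_derivative[OF smooth_psi phi_in_W])

lemma linear_dpsi: "x \<in> U \<Longrightarrow> linear (dpsi x)"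
  using has_derivative_linear[OF has_derivative_psi] .

lemma dpsi_dphi:
  assumes "x \<in> U"
  shows "dpsi x (frechet_derivative \<phi> (at x) v) = v"
proof -
  have "((\<lambda>x. \<psi> (\<phi> x)) has_derivative (\<lambda>v. dpsi x (frechet_derivative \<phi> (at x) v))) (at x)"
    using diff_chain_at[OF smooth_on_has_derivative[OF smooth_phi assms] has_derivative_psi[OF assms]]
    by (simp add: o_def)
  moreover have "((\<lambda>x. \<psi> (\<phi> x)) has_derivative (\<lambda>v. v)) (at x)"
    using has_derivative_transform_within_open[OF has_derivative_ident open_U assms] psi_phi
    by simp
  ultimately show ?thesis
    by (metis has_derivative_unique)
qed

lemma inj_dpsi:
  assumes "x \<in> U"
  shows "inj (dpsi x)"
proof -
  have "surj (dpsi x)"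
    using dpsi_dphi[OF assms] by (rule surjI)
  then show ?thesis
    using linear_surj_imp_inj[OF linear_dpsi[OF assms]] by blast
qed

lemma dpsi_eq_0_iff: "x \<in> U \<Longrightarrow> dpsi x s = 0 \<longleftrightarrow> s = 0"
  using inj_dpsi linear_dpsi by (metis injD linear_0)

lemma dim_image_dpsi: "x \<in> U \<Longrightarrow> dim (dpsi x ` X) = dim X"
  using dim_image_eq[OF linear_dpsi inj_on_subset[OF inj_dpsi subset_UNIV]] .

lemma tangent_space_subset:
  assumes "x \<in> M \<inter> U" "v \<in> tangent_space M x"
  shows "v \<in> dpsi x ` S"
proof -
  let ?d\<phi> = "frechet_derivative \<phi> (at x)"
  obtain \<gamma> where \<gamma>: "curve_through M x \<gamma>" "(\<gamma> has_vector_derivative v) (at 0)"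
    using assms(2) unfolding tangent_space_def by blast
  have \<gamma>0: "\<gamma> 0 = x" and \<gamma>M: "\<forall>t. \<gamma> t \<in> M" and "continuous_on UNIV \<gamma>"
    using \<gamma>(1) smooth_on_continuous_on unfolding curve_through_def by auto
  then have "(\<gamma> \<longlongrightarrow> x) (at 0)"
    by (metis continuous_on_eq_continuous_at isCont_def open_UNIV UNIV_I)
  then have "eventually (\<lambda>t. \<gamma> t \<in> U) (at 0)"
    using topological_tendstoD[OF _ open_U] assms(1) by blast
  then have "eventually (\<lambda>t. (\<phi> \<circ> \<gamma>) t \<in> S) (at 0)"
    by eventually_elim (use \<gamma>M phi_image_M in force)
  moreover have "(\<phi> \<circ> \<gamma>) 0 \<in> S"
    using \<gamma>0 assms(1) phi_image_M by force
  moreover have "((\<phi> \<circ> \<gamma>) has_vector_derivative ?d\<phi> v) (at 0)"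
    using has_vector_derivative_along_curve[OF open_U assms(1)
        smooth_on_has_derivative[OF smooth_phi IntD2[OF assms(1)]] _ \<gamma>] by simp
  ultimately have "?d\<phi> v \<in> S"
    by (rule has_vector_derivative_in_subspace[OF subspace_S])
  then show ?thesis
    using dpsi_dphi[of x v] assms(1) by (intro image_eqI[of _ _ "?d\<phi> v"]) auto
qed

lemma dpsi_in_tangent_space:
  assumes "x \<in> M \<inter> U" "s \<in> S"
  shows "dpsi x s \<in> tangent_space M x"
proof -
  have \<phi>x: "\<phi> x \<in> W \<inter> S"
    using assms(1) phi_image_M by blast
  then obtain h where h: "\<And>k. Ck_on k h UNIV" "\<And>t. h t \<in> W" "\<And>t. \<exists>c. h t = \<phi> x + c *\<^sub>R s"
    "h 0 = \<phi> x" "(h has_vector_derivative s) (at 0)"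
    using smooth_line_in_open_set[OF open_W] by blast
  have h_S: "h t \<in> S" for t
  proof -
    obtain c where "h t = \<phi> x + c *\<^sub>R s"
      using h(3) by blast
    then show ?thesis
      using subspace_add[OF subspace_S _ subspace_scale[OF subspace_S assms(2)]] \<phi>x by simp
  qed
  define \<gamma> where "\<gamma> t = \<psi> (h t)" for t
  have "Ck_on k \<gamma> UNIV" for k
    unfolding \<gamma>_def using h(1,2) smooth_on_Ck_on[OF smooth_psi]
    by (intro Ck_on_compose[OF open_UNIV open_W, where h=h and g=\<psi>]) auto
  moreover have "\<gamma> t \<in> M" for t
  proof -
    obtain y where "y \<in> M \<inter> U" "h t = \<phi> y"
      using h(2) h_S phi_image_M by (metis IntI imageE)
    then show ?thesis
      unfolding \<gamma>_def using psi_phi by simp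
  qed
  moreover have "\<gamma> 0 = x"
    unfolding \<gamma>_def using h(4) assms(1) psi_phi by simp
  ultimately have "curve_through M x \<gamma>"
    unfolding curve_through_def smooth_on_def by simp
  moreover have "((\<psi> \<circ> h) has_derivative (dpsi x \<circ> (\<lambda>t. t *\<^sub>R s))) (at 0)"
    using h(5) has_derivative_psi[of x] assms(1) h(4)
    unfolding has_vector_derivative_def by (intro diff_chain_at) simp_all
  then have "(\<gamma> has_vector_derivative dpsi x s) (at 0)"
    using linear_dpsi[of x] assms(1)
    unfolding has_vector_derivative_def \<gamma>_def by (simp add: o_def linear_scale)
  ultimately show ?thesis
    unfolding tangent_space_def by blast
qed

lemma tangent_space_eq:
  assumes "x \<in> M \<inter> U"
  shows "tangent_space M x = dpsi x ` S"
  using tangent_space_subset[OF assms] dpsi_in_tangent_space[OF assms] by blast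

lemma dim_tangent_space:
  assumes "x \<in> M \<inter> U"
  shows "dim (tangent_space M x) = dim S"
  using assms by (simp add: tangent_space_eq dim_image_dpsi)

lemma subspace_preimage_dpsi:
  assumes "x \<in> U" "subspace C"
  shows "subspace (S \<inter> dpsi x -` C)"
  using subspace_inter[OF subspace_S real_vector.linear_subspace_linear_preimage[OF
        linear_dpsi[OF assms(1)] assms(2)]]
  by (simp add: vimage_def)

lemma dim_preimage_dpsi:
  assumes "x \<in> M \<inter> U" "C \<subseteq> tangent_space M x"
  shows "dim (S \<inter> dpsi x -` C) = dim C"
proof -
  have "dpsi x ` (S \<inter> dpsi x -` C) = C"
    using assms(2) unfolding tangent_space_eq[OF assms(1)] by blast
  then show ?thesis
    using dim_image_dpsi[of x "S \<inter> dpsi x -` C"] assms(1) by simp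
qed

lemma continuous_on_dpsi: "continuous_on (U \<times> UNIV) (\<lambda>(x, s). dpsi x s)"
  unfolding case_prod_unfold
proof (rule continuous_on_linear_family[where L="\<lambda>z. dpsi (fst z)" and w=snd])
  show "linear (dpsi (fst z))" if "z \<in> U \<times> UNIV" for z
    using that linear_dpsi by auto
  have "continuous_on (U \<times> UNIV) (\<lambda>z. \<phi> (fst z))"
    by (rule continuous_on_compose2[OF smooth_on_continuous_on[OF smooth_phi] continuous_on_fst])
      (auto intro: continuous_on_id)
  then show "continuous_on (U \<times> UNIV) (\<lambda>z. dpsi (fst z) i)" for i
    unfolding dpsi_def
    by (rule continuous_on_compose2[OF smooth_on_continuous_on_derivative[OF smooth_psi]])
      (use phi_in_W in auto)
qed (rule continuous_on_snd[OF continuous_on_id])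

end

section \<open>Semicontinuity of the kernel dimension\<close>

locale chart_extension = chart M U W \<phi> \<psi> S
  for M :: "'a::euclidean_space set" and U W \<phi> \<psi> S +
  fixes f F :: "'a \<Rightarrow> 'b::euclidean_space" and V :: "'a set"
  assumes smooth_F: "smooth_on F V" and F_eq_f: "\<And>x. x \<in> M \<inter> V \<Longrightarrow> F x = f x"
begin

definition df_chart :: "'a \<Rightarrow> 'a \<Rightarrow> 'b"
  where "df_chart x s = frechet_derivative F (at x) (dpsi x s)"

lemma differential_dpsi:
  assumes "x \<in> M \<inter> U \<inter> V" "s \<in> S"
  shows "differential M f x (dpsi x s) = df_chart x s"
  unfolding df_chart_def
proof (rule differential_eq_ambient_derivative[OF smooth_on_open[OF smooth_F]])
  show "(F has_derivative frechet_derivative F (at x)) (at x)"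
    using assms by (intro smooth_on_has_derivative[OF smooth_F]) simp
  show "dpsi x s \<in> tangent_space M x"
    using assms by (intro dpsi_in_tangent_space) auto
qed (use assms F_eq_f in auto)

lemma linear_df_chart: "x \<in> U \<inter> V \<Longrightarrow> linear (df_chart x)"
  unfolding df_chart_def
  using linear_compose[OF linear_dpsi has_derivative_linear[OF smooth_on_has_derivative[OF smooth_F]]]
  by (simp add: o_def)

lemma kernel_differential_eq:
  assumes "x \<in> M \<inter> U \<inter> V"
  shows "{v \<in> tangent_space M x. differential M f x v = 0} = dpsi x ` (S \<inter> {s. df_chart x s = 0})"
  using assms differential_dpsi by (auto simp: tangent_space_eq)

lemma subspace_kernel_df_chart: "x \<in> U \<inter> V \<Longrightarrow> subspace (S \<inter> {s. df_chart x s = 0})"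
  using subspace_inter[OF subspace_S real_vector.linear_subspace_kernel[OF linear_df_chart]] by simp

lemma subspace_kernel_differential:
  assumes "x \<in> M \<inter> U \<inter> V"
  shows "subspace {v \<in> tangent_space M x. differential M f x v = 0}"
  unfolding kernel_differential_eq[OF assms]
  using assms by (intro linear_subspace_image linear_dpsi subspace_kernel_df_chart) auto

lemma dim_kernel_differential:
  assumes "x \<in> M \<inter> U \<inter> V"
  shows "dim {v \<in> tangent_space M x. differential M f x v = 0} = dim (S \<inter> {s. df_chart x s = 0})"
  using assms by (simp add: kernel_differential_eq dim_image_dpsi)

lemma continuous_on_df_chart: "continuous_on ((U \<inter> V) \<times> UNIV) (\<lambda>(x, s). df_chart x s)"
  unfolding case_prod_unfold df_chart_def
proof (rule continuous_on_linear_family[where L="\<lambda>z. frechet_derivative F (at (fst z))"])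
  show "linear (frechet_derivative F (at (fst z)))" if "z \<in> (U \<inter> V) \<times> UNIV" for z
    using that has_derivative_linear[OF smooth_on_has_derivative[OF smooth_F]] by auto
  show "continuous_on ((U \<inter> V) \<times> UNIV) (\<lambda>z. frechet_derivative F (at (fst z)) i)" for i
    by (rule continuous_on_compose2[OF smooth_on_continuous_on_derivative[OF smooth_F]
          continuous_on_fst[OF continuous_on_id]]) auto
  show "continuous_on ((U \<inter> V) \<times> UNIV) (\<lambda>z. dpsi (fst z) (snd z))"
    by (rule continuous_on_subset[OF continuous_on_dpsi[unfolded case_prod_unfold]]) auto
qed

lemma continuous_on_f: "continuous_on (M \<inter> V) f"
  using continuous_on_subset[OF smooth_on_continuous_on[OF smooth_F]] F_eq_f
  by (metis continuous_on_cong inf_le2)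

lemma continuous_on_norm_df_chart:
  "continuous_on ((M \<inter> U \<inter> V) \<times> UNIV) (\<lambda>(x, s). norm (df_chart x s))"
proof -
  have "continuous_on ((M \<inter> U \<inter> V) \<times> UNIV) (\<lambda>(x, s). df_chart x s)"
    by (rule continuous_on_subset[OF continuous_on_df_chart]) auto
  then show ?thesis
    unfolding case_prod_unfold by (rule continuous_on_norm)
qed

lemma dim_kernel_upper_semicontinuous:
  assumes x0: "x0 \<in> M \<inter> U \<inter> V" and C0: "subspace C0" "C0 \<subseteq> tangent_space M x0"
    and inj: "{v \<in> tangent_space M x0. differential M f x0 v = 0} \<inter> C0 = {0}"
  obtains e where "e > 0" "\<And>x. x \<in> M \<inter> U \<inter> V \<Longrightarrow> dist x x0 < e \<Longrightarrow>
      dim C0 + dim {v \<in> tangent_space M x. differential M f x v = 0} \<le> dim S"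
proof -
  define E0 where "E0 = S \<inter> dpsi x0 -` C0"
  have E0: "subspace E0" "dim E0 = dim C0"
    unfolding E0_def using subspace_preimage_dpsi dim_preimage_dpsi x0 C0 by auto
  have "norm (df_chart x0 s) > 0" if "s \<in> E0" "s \<noteq> 0" for s
  proof -
    have "dpsi x0 s \<in> {v \<in> tangent_space M x0. differential M f x0 v = 0} \<inter> C0 \<Longrightarrow> False"
      using inj that x0 dpsi_eq_0_iff by auto
    then show ?thesis
      using that x0 dpsi_in_tangent_space differential_dpsi unfolding E0_def by auto
  qed
  moreover have "norm (df_chart x (c *\<^sub>R s)) > 0"
    if "x \<in> M \<inter> U \<inter> V" "c > 0" "norm (df_chart x s) > 0" for x s c
    using that linear_scale[OF linear_df_chart] by auto
  ultimately obtain e where "e > 0" and near: "\<And>x s. x \<in> M \<inter> U \<inter> V \<Longrightarrow> dist x x0 < e \<Longrightarrow>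
      s \<in> E0 \<Longrightarrow> s \<noteq> 0 \<Longrightarrow> norm (df_chart x s) > 0"
    using positive_near_on_subspace[OF continuous_on_norm_df_chart E0(1) x0] by blast
  show thesis
  proof (rule that[OF \<open>e > 0\<close>])
    fix x assume x: "x \<in> M \<inter> U \<inter> V" "dist x x0 < e"
    have "E0 \<inter> (S \<inter> {s. df_chart x s = 0}) \<subseteq> {0}"
      using near[OF x] by force
    then have "dim E0 + dim (S \<inter> {s. df_chart x s = 0}) \<le> dim S"
      using x subspace_S E0(1) subspace_kernel_df_chart unfolding E0_def
      by (intro dim_add_le_of_Int_zero) auto
    then show "dim C0 + dim {v \<in> tangent_space M x. differential M f x v = 0} \<le> dim S"
      using E0(2) dim_kernel_differential[OF x(1)] by simp
  qed
qed

lemma dim_conf_subspace_add_dim_kernel_eq: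
  assumes "x \<in> M \<inter> U \<inter> V" "conf_subspace (differential M f x) (tangent_space M x) g g' C r"
  shows "dim C + dim {v \<in> tangent_space M x. differential M f x v = 0} = dim S"
  using dim_kernel_add_dim_conf_subspace[OF assms(2) subspace_kernel_differential[OF assms(1)]]
    dim_tangent_space assms(1) by simp

definition conformal_defect ::
  "('a \<Rightarrow> 'a \<Rightarrow> 'a \<Rightarrow> real) \<Rightarrow> ('b \<Rightarrow> 'b \<Rightarrow> 'b \<Rightarrow> real) \<Rightarrow> ('a \<Rightarrow> real) \<Rightarrow> 'a \<Rightarrow> 'a \<Rightarrow> real"
  where "conformal_defect gM gN \<Lambda> x s =
    \<Lambda> x * gM x (dpsi x s) (dpsi x s) - gN (f x) (df_chart x s) (df_chart x s)"

lemma continuous_on_conformal_defect: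
  assumes "riemannian_metric M gM" "riemannian_metric N gN" "f ` M \<subseteq> N" "continuous_on M \<Lambda>"
  shows "continuous_on ((M \<inter> U \<inter> V) \<times> UNIV) (\<lambda>(x, s). conformal_defect gM gN \<Lambda> x s)"
proof -
  let ?D = "(M \<inter> U \<inter> V) \<times> (UNIV :: 'a set)"
  have fst: "continuous_on ?D (\<lambda>z. h (fst z))" if "continuous_on (M \<inter> V) h" for h :: "'a \<Rightarrow> 'c::topological_space"
    by (rule continuous_on_compose2[OF that continuous_on_fst[OF continuous_on_id]]) auto
  have "continuous_on ?D (\<lambda>z. \<Lambda> (fst z) * gM (fst z) (dpsi (fst z) (snd z)) (dpsi (fst z) (snd z))
      - gN (f (fst z)) (df_chart (fst z) (snd z)) (df_chart (fst z) (snd z)))"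
  proof (intro continuous_on_diff continuous_on_mult continuous_on_metric_along_map[OF assms(1)]
      continuous_on_metric_along_map[OF assms(2)])
    show "continuous_on ?D (\<lambda>z. \<Lambda> (fst z))"
      using assms(4) by (intro fst) (auto intro: continuous_on_subset)
    show "continuous_on ?D (\<lambda>z. f (fst z))"
      using continuous_on_f by (rule fst)
    show "continuous_on ?D (\<lambda>z. dpsi (fst z) (snd z))"
      by (rule continuous_on_subset[OF continuous_on_dpsi[unfolded case_prod_unfold]]) auto
    show "continuous_on ?D (\<lambda>z. df_chart (fst z) (snd z))"
      by (rule continuous_on_subset[OF continuous_on_df_chart[unfolded case_prod_unfold]]) auto
  qed (use assms(3) in \<open>auto intro: continuous_on_fst continuous_on_id\<close>)
  then show ?thesis
    by (simp add: case_prod_unfold conformal_defect_def)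
qed

lemma conformal_defect_scaleR:
  assumes "riemannian_metric M gM" "riemannian_metric N gN" "f ` M \<subseteq> N" "x \<in> M \<inter> U \<inter> V"
  shows "conformal_defect gM gN \<Lambda> x (c *\<^sub>R s) = c\<^sup>2 * conformal_defect gM gN \<Lambda> x s"
proof -
  have "bilinear (gM x)" "bilinear (gN (f x))" "linear (dpsi x)" "linear (df_chart x)"
    using assms riemannian_metric_bilinear linear_dpsi linear_df_chart by auto
  then show ?thesis
    by (simp add: conformal_defect_def linear_scale bilinear_scaleR_diag right_diff_distrib)
qed

lemma conformal_defect_pos_on_kernel:
  assumes "riemannian_metric M gM" "riemannian_metric N gN" "f ` M \<subseteq> N"
    and "x \<in> M \<inter> U \<inter> V" "\<Lambda> x > 0" "s \<in> S" "s \<noteq> 0" "df_chart x s = 0"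
  shows "conformal_defect gM gN \<Lambda> x s > 0"
proof -
  have "dpsi x s \<in> tangent_space M x" "dpsi x s \<noteq> 0"
    using assms(4,6,7) dpsi_in_tangent_space dpsi_eq_0_iff by auto
  then have "gM x (dpsi x s) (dpsi x s) > 0"
    using assms(4) by (intro riemannian_metric_positive[OF assms(1)]) simp_all
  moreover have "bilinear (gN (f x))"
    using assms(2-4) riemannian_metric_bilinear by blast
  ultimately show ?thesis
    using assms(5,8) by (simp add: conformal_defect_def bilinear_lzero)
qed

lemma conformal_defect_eq_0_on_conf_subspace:
  assumes "x \<in> M \<inter> U \<inter> V"
    and "conf_subspace (differential M f x) (tangent_space M x) (gM x) (gN (f x)) C (\<Lambda> x)"
    and "s \<in> S" "dpsi x s \<in> C"
  shows "conformal_defect gM gN \<Lambda> x s = 0"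
proof -
  have "dpsi x s \<in> C \<Longrightarrow> gN (f x) (differential M f x (dpsi x s)) (differential M f x (dpsi x s))
      = \<Lambda> x * gM x (dpsi x s) (dpsi x s)"
    using assms(2) unfolding conf_subspace_def by blast
  then show ?thesis
    using assms(4) differential_dpsi[OF assms(1,3)] by (simp add: conformal_defect_def)
qed

lemma dim_kernel_lower_semicontinuous:
  assumes gM: "riemannian_metric M gM" and gN: "riemannian_metric N gN" and "f ` M \<subseteq> N"
    and "continuous_on M \<Lambda>" and x0: "x0 \<in> M \<inter> U \<inter> V" "\<Lambda> x0 > 0"
  obtains e where "e > 0" "\<And>x C. x \<in> M \<inter> U \<inter> V \<Longrightarrow> dist x x0 < e \<Longrightarrow>
      conf_subspace (differential M f x) (tangent_space M x) (gM x) (gN (f x)) C (\<Lambda> x) \<Longrightarrow>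
      dim C + dim {v \<in> tangent_space M x0. differential M f x0 v = 0} \<le> dim S"
proof -
  define K0 where "K0 = S \<inter> {s. df_chart x0 s = 0}"
  have K0: "subspace K0"
    unfolding K0_def using x0 by (intro subspace_kernel_df_chart) simp
  have "conformal_defect gM gN \<Lambda> x (c *\<^sub>R s) > 0"
    if "x \<in> M \<inter> U \<inter> V" "c > 0" "conformal_defect gM gN \<Lambda> x s > 0" for x s c
    using that conformal_defect_scaleR[OF gM gN \<open>f ` M \<subseteq> N\<close> that(1)] by simp
  then obtain e where "e > 0" and near: "\<And>x s. x \<in> M \<inter> U \<inter> V \<Longrightarrow> dist x x0 < e \<Longrightarrow>
      s \<in> K0 \<Longrightarrow> s \<noteq> 0 \<Longrightarrow> conformal_defect gM gN \<Lambda> x s > 0"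
    using positive_near_on_subspace[OF continuous_on_conformal_defect[OF assms(1-4)] K0 x0(1)]
      conformal_defect_pos_on_kernel[OF assms(1-3) x0(1), of \<Lambda>] x0(2) unfolding K0_def by blast
  show thesis
  proof (rule that[OF \<open>e > 0\<close>])
    fix x C assume x: "x \<in> M \<inter> U \<inter> V" "dist x x0 < e"
      and C: "conf_subspace (differential M f x) (tangent_space M x) (gM x) (gN (f x)) C (\<Lambda> x)"
    define E where "E = S \<inter> dpsi x -` C"
    have "subspace C" "C \<subseteq> tangent_space M x"
      using C unfolding conf_subspace_def by blast+
    then have E: "subspace E" "dim E = dim C"
      unfolding E_def using subspace_preimage_dpsi dim_preimage_dpsi x(1) by auto
    have "E \<inter> K0 \<subseteq> {0}"
      using near[OF x] conformal_defect_eq_0_on_conf_subspace[where gM=gM and gN=gN and \<Lambda>=\<Lambda>,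
          OF x(1) C]
      unfolding E_def by force
    then have "dim E + dim K0 \<le> dim S"
      using x0 subspace_S E(1) K0 unfolding E_def K0_def by (intro dim_add_le_of_Int_zero) auto
    then show "dim C + dim {v \<in> tangent_space M x0. differential M f x0 v = 0} \<le> dim S"
      using E(2) dim_kernel_differential[OF x0(1)] by (simp add: K0_def)
  qed
qed

lemma dim_kernel_locally_constant_in_chart:
  assumes "riemannian_metric M gM" "riemannian_metric N gN" "f ` M \<subseteq> N" "continuous_on M \<Lambda>"
    and pos: "\<And>x. x \<in> M \<Longrightarrow> \<Lambda> x > 0"
    and conf: "\<And>x. x \<in> M \<Longrightarrow>
      \<exists>C. conf_subspace (differential M f x) (tangent_space M x) (gM x) (gN (f x)) C (\<Lambda> x)"
    and x0: "x0 \<in> M \<inter> U \<inter> V"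
  shows "\<exists>e>0. \<forall>x\<in>M. dist x x0 < e \<longrightarrow>
    dim {v \<in> tangent_space M x. differential M f x v = 0}
      = dim {v \<in> tangent_space M x0. differential M f x0 v = 0}"
proof -
  let ?kd = "\<lambda>x. dim {v \<in> tangent_space M x. differential M f x v = 0}"
  obtain C0 where C0: "conf_subspace (differential M f x0) (tangent_space M x0) (gM x0) (gN (f x0)) C0 (\<Lambda> x0)"
    using conf x0 by blast
  then have "subspace C0" "C0 \<subseteq> tangent_space M x0"
    "{v \<in> tangent_space M x0. differential M f x0 v = 0} \<inter> C0 = {0}"
    unfolding conf_subspace_def by blast+
  then obtain e1 where "e1 > 0" and upper: "\<And>x. x \<in> M \<inter> U \<inter> V \<Longrightarrow> dist x x0 < e1 \<Longrightarrow>
      dim C0 + ?kd x \<le> dim S"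
    using dim_kernel_upper_semicontinuous[OF x0] by blast
  obtain e2 where "e2 > 0" and lower: "\<And>x C. x \<in> M \<inter> U \<inter> V \<Longrightarrow> dist x x0 < e2 \<Longrightarrow>
      conf_subspace (differential M f x) (tangent_space M x) (gM x) (gN (f x)) C (\<Lambda> x) \<Longrightarrow>
      dim C + ?kd x0 \<le> dim S"
    using dim_kernel_lower_semicontinuous[OF assms(1-4) x0 pos] x0 by blast
  obtain e3 where "e3 > 0" and ball: "ball x0 e3 \<subseteq> U \<inter> V"
    using openE[OF open_Int[OF open_U smooth_on_open[OF smooth_F]]] x0 by blast
  show ?thesis
  proof (intro exI[of _ "min e1 (min e2 e3)"] conjI ballI impI)
    show "min e1 (min e2 e3) > 0"
      using \<open>e1 > 0\<close> \<open>e2 > 0\<close> \<open>e3 > 0\<close> by simp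
    fix x assume "x \<in> M" "dist x x0 < min e1 (min e2 e3)"
    then have x: "x \<in> M \<inter> U \<inter> V" and "dist x x0 < e1" "dist x x0 < e2"
      using ball by (auto simp: dist_commute)
    obtain C where C: "conf_subspace (differential M f x) (tangent_space M x) (gM x) (gN (f x)) C (\<Lambda> x)"
      using conf \<open>x \<in> M\<close> by blast
    show "?kd x = ?kd x0"
      using upper[OF x \<open>dist x x0 < e1\<close>] lower[OF x \<open>dist x x0 < e2\<close> C]
        dim_conf_subspace_add_dim_kernel_eq[OF x0 C0] dim_conf_subspace_add_dim_kernel_eq[OF x C]
      by linarith
  qed
qed

end

lemma chart_extension_exists:
  fixes f :: "'a::euclidean_space \<Rightarrow> 'b::euclidean_space"
  assumes "embedded_submanifold M m" "smooth_map M N f" "x0 \<in> M"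
  obtains U W \<phi> \<psi> S F V where "chart_extension M U W \<phi> \<psi> S f F V" "x0 \<in> U \<inter> V" "dim S = m"
proof -
  obtain U W and \<phi> \<psi> :: "'a \<Rightarrow> 'a" and S
    where "open U \<and> x0 \<in> U \<and> open W \<and> smooth_on \<phi> U \<and> smooth_on \<psi> W \<and>
      \<phi> ` U = W \<and> (\<forall>x\<in>U. \<psi> (\<phi> x) = x) \<and> (\<forall>y\<in>W. \<phi> (\<psi> y) = y) \<and>
      subspace S \<and> dim S = m \<and> \<phi> ` (M \<inter> U) = W \<inter> S"
    using assms(1)[unfolded embedded_submanifold_def, rule_format, OF assms(3)]
    by (elim exE) (erule that)
  moreover obtain V F where "x0 \<in> V" "smooth_on F V" "\<forall>x\<in>M \<inter> V. F x = f x"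
    using assms(2,3) unfolding smooth_map_def by blast
  ultimately show thesis
    by (intro that[of U W \<phi> \<psi> S F V]) (simp_all add: chart_extension_def chart_def
        chart_extension_axioms_def)
qed

lemma dim_conf_subspace_add_dim_kernel:
  assumes "embedded_submanifold M m" "smooth_map M N f" "x \<in> M"
    and "conf_subspace (differential M f x) (tangent_space M x) g g' C r"
  shows "dim C + dim {v \<in> tangent_space M x. differential M f x v = 0} = m"
proof -
  obtain U W \<phi> \<psi> S F V where "chart_extension M U W \<phi> \<psi> S f F V" "x \<in> U \<inter> V" "dim S = m"
    using chart_extension_exists[OF assms(1-3)] .
  then interpret chart_extension M U W \<phi> \<psi> S f F V
    by simp
  show ?thesis
    using dim_conf_subspace_add_dim_kernel_eq[OF _ assms(4)] \<open>x \<in> U \<inter> V\<close> \<open>dim S = m\<close> assms(3)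
    by simp
qed

lemma dim_kernel_locally_constant:
  assumes "embedded_submanifold M m" "riemannian_metric M gM" "riemannian_metric N gN"
    and "conformal_riemannian_morphism M gM N gN f" "x0 \<in> M"
  shows "\<exists>e>0. \<forall>x\<in>M. dist x x0 < e \<longrightarrow>
    dim {v \<in> tangent_space M x. differential M f x v = 0}
      = dim {v \<in> tangent_space M x0. differential M f x0 v = 0}"
proof -
  obtain \<Lambda> where f: "smooth_map M N f" and \<Lambda>: "smooth_fun_on M \<Lambda>" "\<forall>x\<in>M. \<Lambda> x > 0"
    and conf: "\<forall>x\<in>M.
      \<exists>C. conf_subspace (differential M f x) (tangent_space M x) (gM x) (gN (f x)) C (\<Lambda> x)"
    using assms(4) unfolding conformal_riemannian_morphism_def geometric_function_def by blast
  obtain U W \<phi> \<psi> S F V where "chart_extension M U W \<phi> \<psi> S f F V" "x0 \<in> U \<inter> V"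
    using chart_extension_exists[OF assms(1) f assms(5)] .
  then interpret chart_extension M U W \<phi> \<psi> S f F V
    by simp
  have "f ` M \<subseteq> N"
    using f unfolding smooth_map_def by blast
  moreover have "x0 \<in> M \<inter> U \<inter> V"
    using assms(5) \<open>x0 \<in> U \<inter> V\<close> by simp
  ultimately show ?thesis
    using \<Lambda>(2) conf
    by (intro dim_kernel_locally_constant_in_chart[OF assms(2,3) _ smooth_fun_on_continuous_on[OF \<Lambda>(1)]])
      auto
qed

theorem mainTheorem8:
  fixes M :: "'a::euclidean_space set" and N :: "'b::euclidean_space set"
    and gM :: "'a \<Rightarrow> 'a \<Rightarrow> 'a \<Rightarrow> real" and gN :: "'b \<Rightarrow> 'b \<Rightarrow> 'b \<Rightarrow> real"
    and f :: "'a \<Rightarrow> 'b" and m n :: nat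
  assumes "embedded_submanifold M m" and "compact M"
    and "embedded_submanifold N n"
    and "riemannian_metric M gM" and "riemannian_metric N gN"
    and "conformal_riemannian_morphism M gM N gN f"
  shows "\<forall>x\<in>M. \<forall>y\<in>M. connected_component M x y \<longrightarrow>
           dim {v \<in> tangent_space M x. differential M f x v = 0}
             = dim {v \<in> tangent_space M y. differential M f y v = 0} \<and>
           (\<forall>Cx Cy rx ry.
              conf_subspace (differential M f x) (tangent_space M x) (gM x) (gN (f x)) Cx rx \<and>
              conf_subspace (differential M f y) (tangent_space M y) (gM y) (gN (f y)) Cy ry
              \<longrightarrow> dim Cx = dim Cy)"
proof (intro ballI impI conjI allI)
  fix x y assume "x \<in> M" "y \<in> M" "connected_component M x y"
  show kernel: "dim {v \<in> tangent_space M x. differential M f x v = 0}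
      = dim {v \<in> tangent_space M y. differential M f y v = 0}"
    by (rule locally_constant_on_connected_component[OF
          dim_kernel_locally_constant[OF assms(1,4,5,6)] \<open>connected_component M x y\<close>])
  have f: "smooth_map M N f"
    using assms(6) unfolding conformal_riemannian_morphism_def by blast
  fix Cx Cy rx ry
  assume "conf_subspace (differential M f x) (tangent_space M x) (gM x) (gN (f x)) Cx rx \<and>
    conf_subspace (differential M f y) (tangent_space M y) (gM y) (gN (f y)) Cy ry"
  then have "dim Cx + dim {v \<in> tangent_space M x. differential M f x v = 0} = m"
    and "dim Cy + dim {v \<in> tangent_space M y. differential M f y v = 0} = m"
    using dim_conf_subspace_add_dim_kernel[OF assms(1) f] \<open>x \<in> M\<close> \<open>y \<in> M\<close> by blast+
  then show "dim Cx = dim Cy"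
    using kernel by linarith
qed

end
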